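(* Let $L\ge2$, $C\ge1$, fix an input $x$ and a label $y\in\{1,\dots,C\}$, and let $A(\bm\theta),B(\bm\theta)\in\mathbb R^C$ be the functions of the ReLU network parameters $\bm\theta=(W_1,b_1,\dots,W_L,b_L)$ defined in the context, so that $F_x(\bm\theta)=A(\bm\theta)-B(\bm\theta)$ is the network output. Define the cross-entropy loss $\mathcal L^{\mathrm{CE}}_{x,y}(\bm\theta)=\operatorname{LSE}(F_x(\bm\theta))-A_y(\bm\theta)+B_y(\bm\theta)$, where $\operatorname{LSE}(t)=\log\sum_{c=1}^Ce^{t_c}=\max_{p\in\Delta_C}\{\langle p,t\rangle-\sum_cp_c\log p_c\}$ and $\Delta_C=\{p\ge0:\mathbf 1^\top p=1\}$. Let $g(\bm\theta)=\operatorname{LSE}(F_x(\bm\theta))+\mathbf 1^\top B(\bm\theta)+B_y(\bm\theta)$ and $h(\bm\theta)=A_y(\bm\theta)+\mathbf 1^\top B(\bm\theta)$. Then $\mathcal L^{\mathrm{CE}}_{x,y}=g-h$, and for every block $\theta_l=(W_l,b_l)$, with all other blocks fixed, $g$ and $h$ are convex in $\theta_l$; i.e. this is a BDC decomposition of $\mathcal L^{\mathrm{CE}}_{x,y}$.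
   Context: Network: $W_l\in\mathbb R^{d_l\times d_{l-1}}$, $b_l\in\mathbb R^{d_l}$ for $l<L$, $W_L\in\mathbb R^{C\times d_{L-1}}$, $b_L\in\mathbb R^C$; $\sigma(t)=\max\{t,0\}$ entrywise; vector max coordinatewise. Set $Z_1^+=\sigma(W_1x+b_1)$, $Z_1^-=0$ and for $l=1,\dots,L-2$: $p_{l+1}=\sigma(W_{l+1})Z_l^++\sigma(-W_{l+1})Z_l^-+b_{l+1}$, $Z_{l+1}^-=\sigma(W_{l+1})Z_l^-+\sigma(-W_{l+1})Z_l^+$, $Z_{l+1}^+=\max\{p_{l+1},Z_{l+1}^-\}$. Then $A(\bm\theta)=\sigma(W_L)Z_{L-1}^++\sigma(-W_L)Z_{L-1}^-+\sigma(b_L)$ and $B(\bm\theta)=\sigma(W_L)Z_{L-1}^-+\sigma(-W_L)Z_{L-1}^++\sigma(-b_L)$; $A_y,B_y$ denote their $y$-th coordinates. *)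

theory Defs
  imports Complex_Main
begin

(* Vectors are functions nat => real (only indices below the layer width matter),
   matrices are functions nat => nat => real (entry (i,j)). *)
type_synonym vec = "nat \<Rightarrow> real"
type_synonym mat = "nat \<Rightarrow> nat \<Rightarrow> real"

definition relu :: "real \<Rightarrow> real" where
  "relu t = max t 0"

definition mv :: "mat \<Rightarrow> nat \<Rightarrow> vec \<Rightarrow> vec" where
  "mv W n z = (\<lambda>i. \<Sum>j<n. W i j * z j)"

definition posm :: "mat \<Rightarrow> mat" where
  "posm W = (\<lambda>i j. relu (W i j))"

definition negm :: "mat \<Rightarrow> mat" where
  "negm W = (\<lambda>i j. relu (- W i j))"

(* d l = width of layer l (d 0 = input dimension); W l, b l = weights/bias of layer l (l = 1..L).
   Zpm ... l = (Z_l^+, Z_l^-) for l >= 1. *)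
fun Zpm :: "(nat \<Rightarrow> nat) \<Rightarrow> (nat \<Rightarrow> mat) \<Rightarrow> (nat \<Rightarrow> vec) \<Rightarrow> vec \<Rightarrow> nat \<Rightarrow> vec \<times> vec" where
  "Zpm d W b x 0 = (\<lambda>_. 0, \<lambda>_. 0)"
| "Zpm d W b x (Suc 0) = (\<lambda>i. relu ((\<Sum>j<d 0. W 1 i j * x j) + b 1 i), \<lambda>_. 0)"
| "Zpm d W b x (Suc (Suc l)) =
     (let Zp = fst (Zpm d W b x (Suc l));
          Zm = snd (Zpm d W b x (Suc l));
          p  = (\<lambda>i. mv (posm (W (l+2))) (d (l+1)) Zp i + mv (negm (W (l+2))) (d (l+1)) Zm i + b (l+2) i);
          zm = (\<lambda>i. mv (posm (W (l+2))) (d (l+1)) Zm i + mv (negm (W (l+2))) (d (l+1)) Zp i)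
      in (\<lambda>i. max (p i) (zm i), zm))"

definition netA :: "(nat \<Rightarrow> nat) \<Rightarrow> nat \<Rightarrow> (nat \<Rightarrow> mat) \<Rightarrow> (nat \<Rightarrow> vec) \<Rightarrow> vec \<Rightarrow> vec" where
  "netA d L W b x =
     (let Zp = fst (Zpm d W b x (L - 1)); Zm = snd (Zpm d W b x (L - 1))
      in (\<lambda>c. mv (posm (W L)) (d (L - 1)) Zp c + mv (negm (W L)) (d (L - 1)) Zm c + relu (b L c)))"

definition netB :: "(nat \<Rightarrow> nat) \<Rightarrow> nat \<Rightarrow> (nat \<Rightarrow> mat) \<Rightarrow> (nat \<Rightarrow> vec) \<Rightarrow> vec \<Rightarrow> vec" where
  "netB d L W b x =
     (let Zp = fst (Zpm d W b x (L - 1)); Zm = snd (Zpm d W b x (L - 1))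
      in (\<lambda>c. mv (posm (W L)) (d (L - 1)) Zm c + mv (negm (W L)) (d (L - 1)) Zp c + relu (- b L c)))"

definition netF :: "(nat \<Rightarrow> nat) \<Rightarrow> nat \<Rightarrow> (nat \<Rightarrow> mat) \<Rightarrow> (nat \<Rightarrow> vec) \<Rightarrow> vec \<Rightarrow> vec" where
  "netF d L W b x = (\<lambda>c. netA d L W b x c - netB d L W b x c)"

definition LSE :: "nat \<Rightarrow> vec \<Rightarrow> real" where
  "LSE C t = ln (\<Sum>c<C. exp (t c))"

definition CE_loss :: "(nat \<Rightarrow> nat) \<Rightarrow> nat \<Rightarrow> nat \<Rightarrow> vec \<Rightarrow> nat \<Rightarrow> (nat \<Rightarrow> mat) \<Rightarrow> (nat \<Rightarrow> vec) \<Rightarrow> real" where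
  "CE_loss d L C x y W b = LSE C (netF d L W b x) - netA d L W b x y + netB d L W b x y"

definition g_part :: "(nat \<Rightarrow> nat) \<Rightarrow> nat \<Rightarrow> nat \<Rightarrow> vec \<Rightarrow> nat \<Rightarrow> (nat \<Rightarrow> mat) \<Rightarrow> (nat \<Rightarrow> vec) \<Rightarrow> real" where
  "g_part d L C x y W b = LSE C (netF d L W b x) + (\<Sum>c<C. netB d L W b x c) + netB d L W b x y"

definition h_part :: "(nat \<Rightarrow> nat) \<Rightarrow> nat \<Rightarrow> nat \<Rightarrow> vec \<Rightarrow> nat \<Rightarrow> (nat \<Rightarrow> mat) \<Rightarrow> (nat \<Rightarrow> vec) \<Rightarrow> real" where
  "h_part d L C x y W b = netA d L W b x y + (\<Sum>c<C. netB d L W b x c)"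

definition block_convex :: "((nat \<Rightarrow> mat) \<Rightarrow> (nat \<Rightarrow> vec) \<Rightarrow> real) \<Rightarrow> (nat \<Rightarrow> mat) \<Rightarrow> (nat \<Rightarrow> vec) \<Rightarrow> nat \<Rightarrow> bool" where
  "block_convex f W b l \<longleftrightarrow>
     (\<forall>(U1::mat) U2 (c1::vec) c2 (t::real). 0 \<le> t \<and> t \<le> 1 \<longrightarrow>
        f (W(l := (\<lambda>i j. t * U1 i j + (1 - t) * U2 i j))) (b(l := (\<lambda>i. t * c1 i + (1 - t) * c2 i)))
        \<le> t * f (W(l := U1)) (b(l := c1)) + (1 - t) * f (W(l := U2)) (b(l := c2)))"

end

theory Submission
  imports Defs "HOL-Analysis.Convex"
begin

(* Fix all blocks except theta_l = (W_l, b_l). Every coordinate of Z_k^+, Z_k^-, A and B is then a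
   nonnegative convex function of theta_l. For k < l it is constant. At layer l the inputs
   Z_(l-1)^+- are constant and nonnegative, and theta_l enters through the convex entries
   relu(W_l), relu(-W_l) and the affine bias. Above layer l the weights relu(+-W_k) are nonnegative
   constants multiplying convex inputs. Sums, such products and maxima preserve convexity, so
   h = A_y + 1^T B is convex in theta_l, and so is g, because
   LSE(A - B) + 1^T B = LSE_c (A_c + sum_(c' ~= c) B_c') composes the monotone convex LSE with
   convex functions. *)

lemma block_convexI:
  assumes "\<And>U1 U2 c1 c2 t. 0 \<le> t \<Longrightarrow> t \<le> 1 \<Longrightarrow>
    f (W(l := \<lambda>i j. t * U1 i j + (1 - t) * U2 i j)) (b(l := \<lambda>i. t * c1 i + (1 - t) * c2 i))
      \<le> t * f (W(l := U1)) (b(l := c1)) + (1 - t) * f (W(l := U2)) (b(l := c2))"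
  shows "block_convex f W b l"
  using assms unfolding block_convex_def by blast

lemma block_convexD:
  assumes "block_convex f W b l" and "0 \<le> t" and "t \<le> 1"
  shows "f (W(l := \<lambda>i j. t * U1 i j + (1 - t) * U2 i j)) (b(l := \<lambda>i. t * c1 i + (1 - t) * c2 i))
      \<le> t * f (W(l := U1)) (b(l := c1)) + (1 - t) * f (W(l := U2)) (b(l := c2))"
  using assms unfolding block_convex_def by blast

definition block_const :: "((nat \<Rightarrow> mat) \<Rightarrow> (nat \<Rightarrow> vec) \<Rightarrow> real) \<Rightarrow> (nat \<Rightarrow> mat) \<Rightarrow> (nat \<Rightarrow> vec) \<Rightarrow> nat \<Rightarrow> bool" where
  "block_const f W b l \<longleftrightarrow> (\<forall>U c. f (W(l := U)) (b(l := c)) = f W b)"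

lemma block_const_imp_block_convex:
  assumes "block_const f W b l"
  shows "block_convex f W b l"
  using assms unfolding block_const_def block_convex_def by (simp add: algebra_simps)

lemma block_convex_weight_entry: "block_convex (\<lambda>W b. W k i j * s) W b l"
  unfolding block_convex_def by (simp add: algebra_simps)

lemma block_convex_bias_entry: "block_convex (\<lambda>W b. b k i) W b l"
  unfolding block_convex_def by (simp add: algebra_simps)

lemma block_convex_neg_bias_entry: "block_convex (\<lambda>W b. - b k i) W b l"
  unfolding block_convex_def by (simp add: algebra_simps)

lemma block_convex_add:
  assumes "block_convex f W b l" and "block_convex g W b l"
  shows "block_convex (\<lambda>W b. f W b + g W b) W b l"
proof (rule block_convexI)
  fix U1 U2 c1 c2 and t :: real
  assume t: "0 \<le> t" "t \<le> 1"
  let ?W = "W(l := \<lambda>i j. t * U1 i j + (1 - t) * U2 i j)" and ?b = "b(l := \<lambda>i. t * c1 i + (1 - t) * c2 i)"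
  from block_convexD[OF assms(1) t, of U1 U2 c1 c2] block_convexD[OF assms(2) t, of U1 U2 c1 c2]
  show "f ?W ?b + g ?W ?b \<le> t * (f (W(l := U1)) (b(l := c1)) + g (W(l := U1)) (b(l := c1)))
      + (1 - t) * (f (W(l := U2)) (b(l := c2)) + g (W(l := U2)) (b(l := c2)))"
    unfolding distrib_left by linarith
qed

lemma block_convex_sum:
  assumes "\<And>i. i \<in> S \<Longrightarrow> block_convex (f i) W b l"
  shows "block_convex (\<lambda>W b. \<Sum>i\<in>S. f i W b) W b l"
proof (rule block_convexI)
  fix U1 U2 c1 c2 and t :: real
  assume t: "0 \<le> t" "t \<le> 1"
  let ?W = "W(l := \<lambda>i j. t * U1 i j + (1 - t) * U2 i j)" and ?b = "b(l := \<lambda>i. t * c1 i + (1 - t) * c2 i)"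
  have "(\<Sum>i\<in>S. f i ?W ?b)
      \<le> (\<Sum>i\<in>S. t * f i (W(l := U1)) (b(l := c1)) + (1 - t) * f i (W(l := U2)) (b(l := c2)))"
    using block_convexD[OF assms t] by (intro sum_mono) blast
  then show "(\<Sum>i\<in>S. f i ?W ?b)
      \<le> t * (\<Sum>i\<in>S. f i (W(l := U1)) (b(l := c1))) + (1 - t) * (\<Sum>i\<in>S. f i (W(l := U2)) (b(l := c2)))"
    by (simp add: sum.distrib sum_distrib_left)
qed

lemma block_convex_max:
  assumes "block_convex f W b l" and "block_convex g W b l"
  shows "block_convex (\<lambda>W b. max (f W b) (g W b)) W b l"
proof (rule block_convexI)
  fix U1 U2 c1 c2 and t :: real
  assume t: "0 \<le> t" "t \<le> 1"
  let ?W = "W(l := \<lambda>i j. t * U1 i j + (1 - t) * U2 i j)" and ?b = "b(l := \<lambda>i. t * c1 i + (1 - t) * c2 i)"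
  let ?m1 = "max (f (W(l := U1)) (b(l := c1))) (g (W(l := U1)) (b(l := c1)))"
    and ?m2 = "max (f (W(l := U2)) (b(l := c2))) (g (W(l := U2)) (b(l := c2)))"
  have "t * f (W(l := U1)) (b(l := c1)) + (1 - t) * f (W(l := U2)) (b(l := c2)) \<le> t * ?m1 + (1 - t) * ?m2"
    and "t * g (W(l := U1)) (b(l := c1)) + (1 - t) * g (W(l := U2)) (b(l := c2)) \<le> t * ?m1 + (1 - t) * ?m2"
    using t by (intro add_mono mult_left_mono; simp)+
  with block_convexD[OF assms(1) t, of U1 U2 c1 c2] block_convexD[OF assms(2) t, of U1 U2 c1 c2]
  show "max (f ?W ?b) (g ?W ?b) \<le> t * ?m1 + (1 - t) * ?m2"
    by (meson max.boundedI order.trans)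
qed

lemma block_convex_relu:
  assumes "block_convex f W b l"
  shows "block_convex (\<lambda>W b. relu (f W b)) W b l"
  unfolding relu_def
  by (intro block_convex_max assms block_const_imp_block_convex) (simp add: block_const_def)

lemma block_convex_mult_block_const:
  assumes "block_const g W b l" and "0 \<le> g W b" and "block_convex f W b l"
  shows "block_convex (\<lambda>W b. g W b * f W b) W b l"
proof (rule block_convexI)
  fix U1 U2 c1 c2 and t :: real
  assume t: "0 \<le> t" "t \<le> 1"
  let ?W = "W(l := \<lambda>i j. t * U1 i j + (1 - t) * U2 i j)" and ?b = "b(l := \<lambda>i. t * c1 i + (1 - t) * c2 i)"
  have "g W b * f ?W ?b \<le> g W b * (t * f (W(l := U1)) (b(l := c1)) + (1 - t) * f (W(l := U2)) (b(l := c2)))"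
    using block_convexD[OF assms(3) t, of U1 U2 c1 c2] assms(2) by (rule mult_left_mono)
  with assms(1) show "g ?W ?b * f ?W ?b
      \<le> t * (g (W(l := U1)) (b(l := c1)) * f (W(l := U1)) (b(l := c1)))
        + (1 - t) * (g (W(l := U2)) (b(l := c2)) * f (W(l := U2)) (b(l := c2)))"
    unfolding block_const_def by (simp add: algebra_simps)
qed

lemma sum_exp_pos:
  fixes u :: vec
  assumes "0 < C"
  shows "0 < (\<Sum>c<C. exp (u c))"
  by (rule sum_pos) (use assms in auto)

lemma LSE_mono:
  assumes "0 < C" and "\<And>c. c < C \<Longrightarrow> u c \<le> v c"
  shows "LSE C u \<le> LSE C v"
proof -
  have "(\<Sum>c<C. exp (u c)) \<le> (\<Sum>c<C. exp (v c))"
    using assms(2) by (intro sum_mono) simp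
  then show ?thesis
    unfolding LSE_def using sum_exp_pos[OF assms(1), of u] sum_exp_pos[OF assms(1), of v] by simp
qed

lemma LSE_add_const:
  assumes "0 < C"
  shows "LSE C (\<lambda>c. u c + s) = LSE C u + s"
  unfolding LSE_def using sum_exp_pos[OF assms, of u]
  by (simp add: exp_add ln_mult flip: sum_distrib_right)

lemma LSE_convex:
  assumes "0 < C" and "0 \<le> t" and "t \<le> 1"
  shows "LSE C (\<lambda>c. t * u c + (1 - t) * v c) \<le> t * LSE C u + (1 - t) * LSE C v"
proof -
  define K where "K = t * LSE C u + (1 - t) * LSE C v"
  define w where "w c = t * u c + (1 - t) * v c - K" for c
  have exp_jensen: "exp (t * p + (1 - t) * q) \<le> t * exp p + (1 - t) * exp q" for p q
    using convex_onD[OF exp_convex, of "1 - t" p q] assms by (simp add: algebra_simps)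
  have normalized: "(\<Sum>c<C. exp (z c - LSE C z)) = 1" for z
    using sum_exp_pos[OF assms(1), of z] by (simp add: LSE_def exp_diff flip: sum_divide_distrib)
  have "(\<Sum>c<C. exp (w c)) = (\<Sum>c<C. exp (t * (u c - LSE C u) + (1 - t) * (v c - LSE C v)))"
    by (simp add: w_def K_def algebra_simps)
  also have "\<dots> \<le> (\<Sum>c<C. t * exp (u c - LSE C u) + (1 - t) * exp (v c - LSE C v))"
    by (intro sum_mono exp_jensen)
  also have "\<dots> = t * (\<Sum>c<C. exp (u c - LSE C u)) + (1 - t) * (\<Sum>c<C. exp (v c - LSE C v))"
    by (simp add: sum.distrib sum_distrib_left)
  also have "\<dots> = 1"
    by (simp add: normalized)
  finally have "LSE C w \<le> 0"
    unfolding LSE_def using sum_exp_pos[OF assms(1), of w] by simp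
  then show ?thesis
    using LSE_add_const[OF assms(1), of w K] by (simp add: w_def K_def)
qed

lemma block_convex_LSE:
  assumes "0 < C" and "\<And>c. c < C \<Longrightarrow> block_convex (\<lambda>W b. u W b c) W b l"
  shows "block_convex (\<lambda>W b. LSE C (u W b)) W b l"
proof (rule block_convexI)
  fix U1 U2 c1 c2 and t :: real
  assume t: "0 \<le> t" "t \<le> 1"
  let ?W = "W(l := \<lambda>i j. t * U1 i j + (1 - t) * U2 i j)" and ?b = "b(l := \<lambda>i. t * c1 i + (1 - t) * c2 i)"
  have "LSE C (u ?W ?b) \<le> LSE C (\<lambda>c. t * u (W(l := U1)) (b(l := c1)) c + (1 - t) * u (W(l := U2)) (b(l := c2)) c)"
    using assms block_convexD[OF _ t] by (intro LSE_mono) blast+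
  also have "\<dots> \<le> t * LSE C (u (W(l := U1)) (b(l := c1))) + (1 - t) * LSE C (u (W(l := U2)) (b(l := c2)))"
    using assms(1) t by (rule LSE_convex)
  finally show "LSE C (u ?W ?b) \<le> \<dots>" .
qed

lemma block_const_weight_entry:
  assumes "k \<noteq> l"
  shows "block_const (\<lambda>W b. M (W k) i j) W b l"
  using assms unfolding block_const_def by simp

lemma posm_nonneg: "0 \<le> posm V i j"
  by (simp add: posm_def relu_def)

lemma negm_nonneg: "0 \<le> negm V i j"
  by (simp add: negm_def relu_def)

lemma block_convex_posm_entry: "block_convex (\<lambda>W b. posm (W k) i j) W b l"
  using block_convex_relu[OF block_convex_weight_entry[of k i j 1]] by (simp add: posm_def)

lemma block_convex_negm_entry: "block_convex (\<lambda>W b. negm (W k) i j) W b l"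
  using block_convex_relu[OF block_convex_weight_entry[of k i j "-1"]] by (simp add: negm_def)

lemma mv_nonneg:
  assumes "\<And>j. 0 \<le> A i j" and "\<And>j. 0 \<le> z j"
  shows "0 \<le> mv A n z i"
  unfolding mv_def using assms by (simp add: sum_nonneg)

lemma block_convex_mv:
  assumes M_nonneg: "\<And>V i j. 0 \<le> M V i j"
    and M_convex: "\<And>i j. block_convex (\<lambda>W b. M (W l) i j) W b l"
    and z_nonneg: "\<And>j. 0 \<le> z W b j"
    and z_const: "\<And>j. k = l \<Longrightarrow> block_const (\<lambda>W b. z W b j) W b l"
    and z_convex: "\<And>j. block_convex (\<lambda>W b. z W b j) W b l"
  shows "block_convex (\<lambda>W b. mv (M (W k)) n (z W b) i) W b l"
  unfolding mv_def
proof (rule block_convex_sum)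
  fix j
  show "block_convex (\<lambda>W b. M (W k) i j * z W b j) W b l"
  proof (cases "k = l")
    case True
    then show ?thesis
      using block_convex_mult_block_const[OF z_const z_nonneg M_convex] by (simp add: mult.commute)
  next
    case False
    then show ?thesis
      by (intro block_convex_mult_block_const block_const_weight_entry M_nonneg z_convex)
  qed
qed

lemma Zpm_nonneg: "0 \<le> fst (Zpm d W b x k) i \<and> 0 \<le> snd (Zpm d W b x k) i"
proof (induction d W b x k arbitrary: i rule: Zpm.induct)
  case (3 d W b x m)
  then have "0 \<le> mv (posm (W (m + 2))) (d (m + 1)) (snd (Zpm d W b x (Suc m))) i
      + mv (negm (W (m + 2))) (d (m + 1)) (fst (Zpm d W b x (Suc m))) i"
    by (intro add_nonneg_nonneg mv_nonneg posm_nonneg negm_nonneg) blast+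
  then show ?case by (simp add: Let_def)
qed (simp_all add: relu_def)

lemma Zpm_fun_upd_other_layer:
  assumes "l \<notin> {1..k}"
  shows "Zpm d (W(l := U)) (b(l := c)) x k = Zpm d W b x k"
  using assms
proof (induction d W b x k rule: Zpm.induct)
  case (3 d W b x m)
  have "Zpm d (W(l := U)) (b(l := c)) x (Suc m) = Zpm d W b x (Suc m)"
    using "3.prems" by (intro "3.IH") auto
  moreover have "(W(l := U)) (m + 2) = W (m + 2)" and "(b(l := c)) (m + 2) = b (m + 2)"
    using "3.prems" by auto
  ultimately show ?case by (simp only: Zpm.simps(3) Let_def)
qed simp_all

lemma Zpm_block_const:
  assumes "l \<notin> {1..k}"
  shows "block_const (\<lambda>W b. fst (Zpm d W b x k) i) W b l \<and> block_const (\<lambda>W b. snd (Zpm d W b x k) i) W b l"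
  using assms by (simp add: block_const_def Zpm_fun_upd_other_layer)

lemma block_convex_Zpm_mv:
  assumes "\<And>j. block_convex (\<lambda>W b. fst (Zpm d W b x (k - 1)) j) W b l
    \<and> block_convex (\<lambda>W b. snd (Zpm d W b x (k - 1)) j) W b l"
  shows "block_convex (\<lambda>W b. mv (posm (W k)) n (fst (Zpm d W b x (k - 1))) i
      + mv (negm (W k)) n (snd (Zpm d W b x (k - 1))) i) W b l"
    and "block_convex (\<lambda>W b. mv (posm (W k)) n (snd (Zpm d W b x (k - 1))) i
      + mv (negm (W k)) n (fst (Zpm d W b x (k - 1))) i) W b l"
proof -
  have "block_const (\<lambda>W b. fst (Zpm d W b x (k - 1)) j) W b l
      \<and> block_const (\<lambda>W b. snd (Zpm d W b x (k - 1)) j) W b l" if "k = l" for j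
    using that by (intro Zpm_block_const) auto
  then show "block_convex (\<lambda>W b. mv (posm (W k)) n (fst (Zpm d W b x (k - 1))) i
      + mv (negm (W k)) n (snd (Zpm d W b x (k - 1))) i) W b l"
    and "block_convex (\<lambda>W b. mv (posm (W k)) n (snd (Zpm d W b x (k - 1))) i
      + mv (negm (W k)) n (fst (Zpm d W b x (k - 1))) i) W b l"
    using Zpm_nonneg assms
    by (intro block_convex_add block_convex_mv posm_nonneg negm_nonneg block_convex_posm_entry
        block_convex_negm_entry; simp)+
qed

lemma Zpm_block_convex:
  "block_convex (\<lambda>W b. fst (Zpm d W b x k) i) W b l \<and> block_convex (\<lambda>W b. snd (Zpm d W b x k) i) W b l"
proof (induction d W b x k arbitrary: i rule: Zpm.induct)
  case (1 d W b x)
  show ?case by (simp add: block_const_imp_block_convex block_const_def)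
next
  case (2 d W b x)
  have "block_convex (\<lambda>W b. relu ((\<Sum>j<d 0. W 1 i j * x j) + b 1 i)) W b l"
    by (intro block_convex_relu block_convex_add block_convex_sum block_convex_weight_entry
        block_convex_bias_entry)
  then show ?case by (simp add: block_const_imp_block_convex block_const_def)
next
  case (3 d W b x m)
  have pre: "block_convex (\<lambda>W b. mv (posm (W (m + 2))) (d (m + 1)) (fst (Zpm d W b x (Suc m))) i
      + mv (negm (W (m + 2))) (d (m + 1)) (snd (Zpm d W b x (Suc m))) i) W b l"
    and zm: "block_convex (\<lambda>W b. mv (posm (W (m + 2))) (d (m + 1)) (snd (Zpm d W b x (Suc m))) i
      + mv (negm (W (m + 2))) (d (m + 1)) (fst (Zpm d W b x (Suc m))) i) W b l"
    using block_convex_Zpm_mv[of d x "m + 2"] "3.IH" by simp_all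
  from block_convex_max[OF block_convex_add[OF pre block_convex_bias_entry] zm] zm
  show ?case by (simp add: Let_def)
qed

lemma netA_block_convex: "block_convex (\<lambda>W b. netA d L W b x c) W b l"
  using block_convex_add[OF block_convex_Zpm_mv(1) block_convex_relu[OF block_convex_bias_entry]] Zpm_block_convex
  by (simp add: netA_def Let_def)

lemma netB_block_convex: "block_convex (\<lambda>W b. netB d L W b x c) W b l"
  using block_convex_add[OF block_convex_Zpm_mv(2) block_convex_relu[OF block_convex_neg_bias_entry]] Zpm_block_convex
  by (simp add: netB_def Let_def)

lemma g_part_eq_LSE:
  assumes "0 < C"
  shows "g_part d L C x y = (\<lambda>W b.
    LSE C (\<lambda>c. netA d L W b x c + (\<Sum>c'\<in>{..<C} - {c}. netB d L W b x c')) + netB d L W b x y)"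
proof (intro ext)
  fix W b
  have "LSE C (netF d L W b x) + (\<Sum>c<C. netB d L W b x c)
      = LSE C (\<lambda>c. netF d L W b x c + (\<Sum>c'<C. netB d L W b x c'))"
    by (simp add: LSE_add_const[OF assms])
  also have "\<dots> = LSE C (\<lambda>c. netA d L W b x c + (\<Sum>c'\<in>{..<C} - {c}. netB d L W b x c'))"
    unfolding LSE_def netF_def
    by (intro arg_cong[where f = ln] sum.cong) (simp_all add: sum.remove)
  finally show "g_part d L C x y W b
      = LSE C (\<lambda>c. netA d L W b x c + (\<Sum>c'\<in>{..<C} - {c}. netB d L W b x c')) + netB d L W b x y"
    unfolding g_part_def by simp
qed

theorem corollary3p5:
  fixes d :: "nat \<Rightarrow> nat" and L C :: nat and x :: vec and y :: nat
  assumes "L \<ge> 2" and "C \<ge> 1" and "y < C"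
  shows "(\<forall>W b. CE_loss d L C x y W b = g_part d L C x y W b - h_part d L C x y W b)
       \<and> (\<forall>W b l. 1 \<le> l \<and> l \<le> L \<longrightarrow>
             block_convex (g_part d L C x y) W b l \<and> block_convex (h_part d L C x y) W b l)"
proof (intro conjI allI impI)
  fix W b
  show "CE_loss d L C x y W b = g_part d L C x y W b - h_part d L C x y W b"
    unfolding CE_loss_def g_part_def h_part_def by simp
next
  fix W b l
  have "0 < C" using assms(2) by simp
  then show "block_convex (g_part d L C x y) W b l"
    unfolding g_part_eq_LSE[OF \<open>0 < C\<close>]
    by (intro block_convex_add block_convex_LSE block_convex_sum netA_block_convex netB_block_convex)
  show "block_convex (h_part d L C x y) W b l"
    unfolding h_part_def by (intro block_convex_add block_convex_sum netA_block_convex netB_block_convex)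
qed

end
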